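(* A category $\mathbf{C}$ is a Kleene-Kozen category if and only if (a) $\mathbf{C}$ is enriched over bounded join-semilattices and strict join-preserving maps, and (b) there is an operator $(\cdot)^\ast:\mathbf{C}(X,X)\to\mathbf{C}(X,X)$ for every object $X$ such that for all objects $X,Y$ and morphisms $f:X\to X$, $g:Y\to Y$, $h:X\to X$, $k:Y\to X$: 1. $f^\ast=\mathrm{id}\lor f^\ast\circ f$; 2. $\mathrm{id}^\ast=\mathrm{id}$; 3. $f^\ast=(f\lor\mathrm{id})^\ast$; 4. if $h\circ k=k\circ g$ then $h^\ast\circ k=k\circ g^\ast$.
   Context: A category $\mathbf{C}$ is enriched over bounded join-semilattices and strict join-preserving maps if each hom-set $\mathbf{C}(X,Y)$ is a join-semilattice $(\lor)$ with a least element $\bot$, and composition preserves binary joins and $\bot$ in each argument; the order is $f\le g\iff f\lor g=g$. A Kleene-Kozen category is such an enriched category together with an operator $(\cdot)^\ast:\mathbf{C}(X,X)\to\mathbf{C}(X,X)$ for every object $X$, such that for all $f:Y\to Y$, $g:Y\to Z$, $h:X\to Y$: $g\circ f^\ast$ is the least prefixpoint of $x\mapsto g\lor x\circ f$ on $\mathbf{C}(Y,Z)$, and $f^\ast\circ h$ is the least prefixpoint of $x\mapsto h\lor f\circ x$ on $\mathbf{C}(X,Y)$. *)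

theory Defs
  imports Main
begin

text \<open>A category presented by its object set, hom-sets, identities and an
object-indexed composition: Comp X Y Z g f is g \<circ> f for f : X \<rightarrow> Y, g : Y \<rightarrow> Z.\<close>

record ('o, 'm) category =
  Obj  :: "'o set"
  Hom  :: "'o \<Rightarrow> 'o \<Rightarrow> 'm set"
  Id   :: "'o \<Rightarrow> 'm"
  Comp :: "'o \<Rightarrow> 'o \<Rightarrow> 'o \<Rightarrow> 'm \<Rightarrow> 'm \<Rightarrow> 'm"

definition category :: "('o, 'm) category \<Rightarrow> bool" where
  "category C \<longleftrightarrow>
     (\<forall>X\<in>Obj C. Id C X \<in> Hom C X X) \<and>
     (\<forall>X\<in>Obj C. \<forall>Y\<in>Obj C. \<forall>Z\<in>Obj C. \<forall>f\<in>Hom C X Y. \<forall>g\<in>Hom C Y Z.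
        Comp C X Y Z g f \<in> Hom C X Z) \<and>
     (\<forall>X\<in>Obj C. \<forall>Y\<in>Obj C. \<forall>f\<in>Hom C X Y.
        Comp C X Y Y (Id C Y) f = f \<and> Comp C X X Y f (Id C X) = f) \<and>
     (\<forall>W\<in>Obj C. \<forall>X\<in>Obj C. \<forall>Y\<in>Obj C. \<forall>Z\<in>Obj C.
        \<forall>f\<in>Hom C W X. \<forall>g\<in>Hom C X Y. \<forall>h\<in>Hom C Y Z.
        Comp C W Y Z h (Comp C W X Y g f) = Comp C W X Z (Comp C X Y Z h g) f)"

definition enriched ::
  "('o, 'm) category \<Rightarrow> ('o \<Rightarrow> 'o \<Rightarrow> 'm \<Rightarrow> 'm \<Rightarrow> 'm) \<Rightarrow> ('o \<Rightarrow> 'o \<Rightarrow> 'm) \<Rightarrow> bool" where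
  "enriched C join bt \<longleftrightarrow>
     (\<forall>X\<in>Obj C. \<forall>Y\<in>Obj C.
        bt X Y \<in> Hom C X Y \<and>
        (\<forall>f\<in>Hom C X Y. \<forall>g\<in>Hom C X Y. join X Y f g \<in> Hom C X Y) \<and>
        (\<forall>f\<in>Hom C X Y. \<forall>g\<in>Hom C X Y. \<forall>h\<in>Hom C X Y.
           join X Y (join X Y f g) h = join X Y f (join X Y g h)) \<and>
        (\<forall>f\<in>Hom C X Y. \<forall>g\<in>Hom C X Y. join X Y f g = join X Y g f) \<and>
        (\<forall>f\<in>Hom C X Y. join X Y f f = f) \<and>
        (\<forall>f\<in>Hom C X Y. join X Y (bt X Y) f = f)) \<and>
     (\<forall>X\<in>Obj C. \<forall>Y\<in>Obj C. \<forall>Z\<in>Obj C.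
        (\<forall>f\<in>Hom C X Y. \<forall>f'\<in>Hom C X Y. \<forall>g\<in>Hom C Y Z.
           Comp C X Y Z g (join X Y f f') = join X Z (Comp C X Y Z g f) (Comp C X Y Z g f')) \<and>
        (\<forall>f\<in>Hom C X Y. \<forall>g\<in>Hom C Y Z. \<forall>g'\<in>Hom C Y Z.
           Comp C X Y Z (join Y Z g g') f = join X Z (Comp C X Y Z g f) (Comp C X Y Z g' f)) \<and>
        (\<forall>g\<in>Hom C Y Z. Comp C X Y Z g (bt X Y) = bt X Z) \<and>
        (\<forall>f\<in>Hom C X Y. Comp C X Y Z (bt Y Z) f = bt X Z))"

definition hom_le :: "('o \<Rightarrow> 'o \<Rightarrow> 'm \<Rightarrow> 'm \<Rightarrow> 'm) \<Rightarrow> 'o \<Rightarrow> 'o \<Rightarrow> 'm \<Rightarrow> 'm \<Rightarrow> bool" where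
  "hom_le join X Y f g \<longleftrightarrow> join X Y f g = g"

definition least_prefixpoint :: "'a set \<Rightarrow> ('a \<Rightarrow> 'a \<Rightarrow> bool) \<Rightarrow> ('a \<Rightarrow> 'a) \<Rightarrow> 'a \<Rightarrow> bool" where
  "least_prefixpoint S le F p \<longleftrightarrow>
     p \<in> S \<and> le (F p) p \<and> (\<forall>x\<in>S. le (F x) x \<longrightarrow> le p x)"

definition kk_star ::
  "('o, 'm) category \<Rightarrow> ('o \<Rightarrow> 'o \<Rightarrow> 'm \<Rightarrow> 'm \<Rightarrow> 'm) \<Rightarrow> ('o \<Rightarrow> 'm \<Rightarrow> 'm) \<Rightarrow> bool" where
  "kk_star C join star \<longleftrightarrow>
     (\<forall>X\<in>Obj C. \<forall>f\<in>Hom C X X. star X f \<in> Hom C X X) \<and>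
     (\<forall>Y\<in>Obj C. \<forall>Z\<in>Obj C. \<forall>f\<in>Hom C Y Y. \<forall>g\<in>Hom C Y Z.
        least_prefixpoint (Hom C Y Z) (hom_le join Y Z)
          (\<lambda>x. join Y Z g (Comp C Y Y Z x f)) (Comp C Y Y Z g (star Y f))) \<and>
     (\<forall>X\<in>Obj C. \<forall>Y\<in>Obj C. \<forall>f\<in>Hom C Y Y. \<forall>h\<in>Hom C X Y.
        least_prefixpoint (Hom C X Y) (hom_le join X Y)
          (\<lambda>x. join X Y h (Comp C X Y Y f x)) (Comp C X Y Y (star Y f) h))"

definition kleene_kozen_category :: "('o, 'm) category \<Rightarrow> bool" where
  "kleene_kozen_category C \<longleftrightarrow> category C \<and>
     (\<exists>join bt star. enriched C join bt \<and> kk_star C join star)"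

definition star_axioms ::
  "('o, 'm) category \<Rightarrow> ('o \<Rightarrow> 'o \<Rightarrow> 'm \<Rightarrow> 'm \<Rightarrow> 'm) \<Rightarrow> ('o \<Rightarrow> 'm \<Rightarrow> 'm) \<Rightarrow> bool" where
  "star_axioms C join star \<longleftrightarrow>
     (\<forall>X\<in>Obj C. \<forall>f\<in>Hom C X X. star X f \<in> Hom C X X) \<and>
     (\<forall>X\<in>Obj C. \<forall>Y\<in>Obj C. \<forall>f\<in>Hom C X X. \<forall>g\<in>Hom C Y Y. \<forall>h\<in>Hom C X X. \<forall>k\<in>Hom C Y X.
        star X f = join X X (Id C X) (Comp C X X X (star X f) f) \<and>
        star X (Id C X) = Id C X \<and>
        star X f = star X (join X X f (Id C X)) \<and>
        (Comp C Y X X h k = Comp C Y Y X k g \<longrightarrow>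
           Comp C Y X X (star X h) k = Comp C Y Y X k (star Y g)))"

end

theory Submission
  imports Defs
begin

text \<open>From the least-prefixpoint characterisation, unfolding (1) holds because the least
  prefixpoint of a monotone map is a fixpoint; (2) and (3) hold because the maps whose least
  prefixpoints are \<open>id\<^sup>*\<close> and \<open>(f \<or> id)\<^sup>*\<close> have the same prefixpoints as \<open>x \<mapsto> id \<or> x\<close> and
  \<open>x \<mapsto> id \<or> x \<circ> f\<close>; and for (4), when \<open>h \<circ> k = k \<circ> g\<close>, each of \<open>h\<^sup>* \<circ> k\<close> and \<open>k \<circ> g\<^sup>*\<close> is a
  fixpoint of the map whose least prefixpoint is the other.
  Conversely, if \<open>x \<circ> f \<le> x\<close> then \<open>id \<circ> x = x \<circ> (f \<or> id)\<close>, so (4), (2) and (3) give the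
  absorption law \<open>x \<circ> f\<^sup>* = x\<close>. Hence every prefixpoint \<open>x\<close> of \<open>x \<mapsto> g \<or> x \<circ> f\<close> satisfies
  \<open>g \<circ> f\<^sup>* \<le> x \<circ> f\<^sup>* = x\<close>, while (1) makes \<open>g \<circ> f\<^sup>*\<close> itself a prefixpoint.\<close>

lemma least_prefixpoint_fixpoint:
  assumes lpp: "least_prefixpoint S le F p"
    and closed: "\<And>x. x \<in> S \<Longrightarrow> F x \<in> S"
    and mono: "\<And>x y. x \<in> S \<Longrightarrow> y \<in> S \<Longrightarrow> le x y \<Longrightarrow> le (F x) (F y)"
    and antisym: "\<And>x y. x \<in> S \<Longrightarrow> y \<in> S \<Longrightarrow> le x y \<Longrightarrow> le y x \<Longrightarrow> x = y"
  shows "F p = p"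
proof -
  have p: "p \<in> S" and pre: "le (F p) p" and least: "\<And>x. x \<in> S \<Longrightarrow> le (F x) x \<Longrightarrow> le p x"
    using lpp unfolding least_prefixpoint_def by auto
  have "le (F (F p)) (F p)"
    using mono[OF closed[OF p] p pre] .
  then have "le p (F p)"
    using least closed p by blast
  then show ?thesis
    using antisym closed p pre by blast
qed

lemma least_prefixpoint_unique:
  assumes "least_prefixpoint S le F p" and "least_prefixpoint S le G q"
    and "\<And>x. x \<in> S \<Longrightarrow> le (F x) x \<longleftrightarrow> le (G x) x"
    and "\<And>x y. x \<in> S \<Longrightarrow> y \<in> S \<Longrightarrow> le x y \<Longrightarrow> le y x \<Longrightarrow> x = y"
  shows "p = q"
  using assms unfolding least_prefixpoint_def by metis

locale join_enriched_category =
  fixes C :: "('o, 'm) category"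
    and join :: "'o \<Rightarrow> 'o \<Rightarrow> 'm \<Rightarrow> 'm \<Rightarrow> 'm"
    and bt :: "'o \<Rightarrow> 'o \<Rightarrow> 'm"
  assumes category: "category C"
    and enriched: "enriched C join bt"
begin

lemma Id_in_Hom [simp]: "X \<in> Obj C \<Longrightarrow> Id C X \<in> Hom C X X"
  using category unfolding category_def by blast

lemma Comp_in_Hom [simp]:
  "\<lbrakk>X \<in> Obj C; Y \<in> Obj C; Z \<in> Obj C; f \<in> Hom C X Y; g \<in> Hom C Y Z\<rbrakk>
    \<Longrightarrow> Comp C X Y Z g f \<in> Hom C X Z"
  using category unfolding category_def by blast

lemma Comp_Id_left [simp]:
  "\<lbrakk>X \<in> Obj C; Y \<in> Obj C; f \<in> Hom C X Y\<rbrakk> \<Longrightarrow> Comp C X Y Y (Id C Y) f = f"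
  using category unfolding category_def by blast

lemma Comp_Id_right [simp]:
  "\<lbrakk>X \<in> Obj C; Y \<in> Obj C; f \<in> Hom C X Y\<rbrakk> \<Longrightarrow> Comp C X X Y f (Id C X) = f"
  using category unfolding category_def by blast

lemma Comp_assoc:
  "\<lbrakk>W \<in> Obj C; X \<in> Obj C; Y \<in> Obj C; Z \<in> Obj C;
    f \<in> Hom C W X; g \<in> Hom C X Y; h \<in> Hom C Y Z\<rbrakk>
    \<Longrightarrow> Comp C W Y Z h (Comp C W X Y g f) = Comp C W X Z (Comp C X Y Z h g) f"
  using category unfolding category_def by blast

lemma join_in_Hom [simp]:
  "\<lbrakk>X \<in> Obj C; Y \<in> Obj C; f \<in> Hom C X Y; g \<in> Hom C X Y\<rbrakk> \<Longrightarrow> join X Y f g \<in> Hom C X Y"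
  using enriched unfolding enriched_def by blast

lemma join_assoc:
  "\<lbrakk>X \<in> Obj C; Y \<in> Obj C; f \<in> Hom C X Y; g \<in> Hom C X Y; h \<in> Hom C X Y\<rbrakk>
    \<Longrightarrow> join X Y (join X Y f g) h = join X Y f (join X Y g h)"
  using enriched unfolding enriched_def by blast

lemma join_commute:
  "\<lbrakk>X \<in> Obj C; Y \<in> Obj C; f \<in> Hom C X Y; g \<in> Hom C X Y\<rbrakk> \<Longrightarrow> join X Y f g = join X Y g f"
  using enriched unfolding enriched_def by blast

lemma join_idem [simp]: "\<lbrakk>X \<in> Obj C; Y \<in> Obj C; f \<in> Hom C X Y\<rbrakk> \<Longrightarrow> join X Y f f = f"
  using enriched unfolding enriched_def by blast

lemma Comp_join_right:
  assumes "X \<in> Obj C" "Y \<in> Obj C" "Z \<in> Obj C" "f \<in> Hom C X Y" "f' \<in> Hom C X Y" "g \<in> Hom C Y Z"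
  shows "Comp C X Y Z g (join X Y f f') = join X Z (Comp C X Y Z g f) (Comp C X Y Z g f')"
  using enriched assms unfolding enriched_def by (simp add: Ball_def)

lemma Comp_join_left:
  assumes "X \<in> Obj C" "Y \<in> Obj C" "Z \<in> Obj C" "f \<in> Hom C X Y" "g \<in> Hom C Y Z" "g' \<in> Hom C Y Z"
  shows "Comp C X Y Z (join Y Z g g') f = join X Z (Comp C X Y Z g f) (Comp C X Y Z g' f)"
  using enriched assms unfolding enriched_def by (simp add: Ball_def)

lemma hom_le_refl: "\<lbrakk>X \<in> Obj C; Y \<in> Obj C; f \<in> Hom C X Y\<rbrakk> \<Longrightarrow> hom_le join X Y f f"
  unfolding hom_le_def by simp

lemma hom_le_antisym:
  "\<lbrakk>X \<in> Obj C; Y \<in> Obj C; f \<in> Hom C X Y; g \<in> Hom C X Y; hom_le join X Y f g; hom_le join X Y g f\<rbrakk>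
    \<Longrightarrow> f = g"
  unfolding hom_le_def by (metis join_commute)

lemma join_le_iff:
  "\<lbrakk>X \<in> Obj C; Y \<in> Obj C; f \<in> Hom C X Y; g \<in> Hom C X Y; h \<in> Hom C X Y\<rbrakk>
    \<Longrightarrow> hom_le join X Y (join X Y f g) h \<longleftrightarrow> hom_le join X Y f h \<and> hom_le join X Y g h"
  unfolding hom_le_def by (metis join_assoc join_commute join_idem join_in_Hom)

lemma join_mono_right:
  "\<lbrakk>X \<in> Obj C; Y \<in> Obj C; d \<in> Hom C X Y; f \<in> Hom C X Y; g \<in> Hom C X Y; hom_le join X Y f g\<rbrakk>
    \<Longrightarrow> hom_le join X Y (join X Y d f) (join X Y d g)"
  unfolding hom_le_def by (metis join_assoc join_commute join_idem join_in_Hom)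

lemma Comp_mono_left:
  "\<lbrakk>X \<in> Obj C; Y \<in> Obj C; Z \<in> Obj C; f \<in> Hom C X Y; g \<in> Hom C Y Z; g' \<in> Hom C Y Z;
    hom_le join Y Z g g'\<rbrakk> \<Longrightarrow> hom_le join X Z (Comp C X Y Z g f) (Comp C X Y Z g' f)"
  unfolding hom_le_def by (metis Comp_join_left)

lemma Comp_mono_right:
  "\<lbrakk>X \<in> Obj C; Y \<in> Obj C; Z \<in> Obj C; g \<in> Hom C Y Z; f \<in> Hom C X Y; f' \<in> Hom C X Y;
    hom_le join X Y f f'\<rbrakk> \<Longrightarrow> hom_le join X Z (Comp C X Y Z g f) (Comp C X Y Z g f')"
  unfolding hom_le_def by (metis Comp_join_right)

end

locale kleene_kozen = join_enriched_category +
  fixes star :: "'o \<Rightarrow> 'm \<Rightarrow> 'm"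
  assumes kk_star: "kk_star C join star"
begin

lemma star_in_Hom [simp]: "\<lbrakk>X \<in> Obj C; f \<in> Hom C X X\<rbrakk> \<Longrightarrow> star X f \<in> Hom C X X"
  using kk_star unfolding kk_star_def by blast

lemma Comp_star_least_prefixpoint:
  "\<lbrakk>Y \<in> Obj C; Z \<in> Obj C; f \<in> Hom C Y Y; g \<in> Hom C Y Z\<rbrakk>
    \<Longrightarrow> least_prefixpoint (Hom C Y Z) (hom_le join Y Z)
          (\<lambda>x. join Y Z g (Comp C Y Y Z x f)) (Comp C Y Y Z g (star Y f))"
  using kk_star unfolding kk_star_def by blast

lemma star_Comp_least_prefixpoint:
  "\<lbrakk>X \<in> Obj C; Y \<in> Obj C; f \<in> Hom C Y Y; h \<in> Hom C X Y\<rbrakk>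
    \<Longrightarrow> least_prefixpoint (Hom C X Y) (hom_le join X Y)
          (\<lambda>x. join X Y h (Comp C X Y Y f x)) (Comp C X Y Y (star Y f) h)"
  using kk_star unfolding kk_star_def by blast

lemma star_least_prefixpoint:
  "\<lbrakk>X \<in> Obj C; f \<in> Hom C X X\<rbrakk>
    \<Longrightarrow> least_prefixpoint (Hom C X X) (hom_le join X X)
          (\<lambda>x. join X X (Id C X) (Comp C X X X x f)) (star X f)"
  using Comp_star_least_prefixpoint[of X X f "Id C X"] by simp

lemma Comp_star_unfold:
  assumes "Y \<in> Obj C" "Z \<in> Obj C" "f \<in> Hom C Y Y" "g \<in> Hom C Y Z"
  shows "join Y Z g (Comp C Y Y Z (Comp C Y Y Z g (star Y f)) f) = Comp C Y Y Z g (star Y f)"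
  by (rule least_prefixpoint_fixpoint[OF Comp_star_least_prefixpoint])
    (use assms in \<open>auto intro: join_mono_right Comp_mono_left hom_le_antisym\<close>)

lemma star_Comp_unfold:
  assumes "X \<in> Obj C" "Y \<in> Obj C" "f \<in> Hom C Y Y" "h \<in> Hom C X Y"
  shows "join X Y h (Comp C X Y Y f (Comp C X Y Y (star Y f) h)) = Comp C X Y Y (star Y f) h"
  by (rule least_prefixpoint_fixpoint[OF star_Comp_least_prefixpoint])
    (use assms in \<open>auto intro: join_mono_right Comp_mono_right hom_le_antisym\<close>)

lemma star_unfold_right:
  "\<lbrakk>X \<in> Obj C; f \<in> Hom C X X\<rbrakk> \<Longrightarrow> star X f = join X X (Id C X) (Comp C X X X (star X f) f)"
  using Comp_star_unfold[of X X f "Id C X"] by simp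

lemma star_unfold_left:
  "\<lbrakk>X \<in> Obj C; f \<in> Hom C X X\<rbrakk> \<Longrightarrow> star X f = join X X (Id C X) (Comp C X X X f (star X f))"
  using star_Comp_unfold[of X X f "Id C X"] by simp

lemma star_Id:
  assumes X: "X \<in> Obj C"
  shows "star X (Id C X) = Id C X"
proof (rule least_prefixpoint_unique[OF star_least_prefixpoint])
  show "least_prefixpoint (Hom C X X) (hom_le join X X) (join X X (Id C X)) (Id C X)"
    using X unfolding least_prefixpoint_def by (simp add: join_le_iff hom_le_refl)
qed (use X in \<open>auto intro: hom_le_antisym\<close>)

lemma star_join_Id:
  assumes X: "X \<in> Obj C" and f: "f \<in> Hom C X X"
  shows "star X f = star X (join X X f (Id C X))"
proof (rule least_prefixpoint_unique[OF star_least_prefixpoint star_least_prefixpoint])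
  fix x assume x: "x \<in> Hom C X X"
  \<comment> \<open>the extra summand \<open>x\<close> is harmless when comparing with \<open>x\<close>\<close>
  have "join X X (Id C X) (Comp C X X X x (join X X f (Id C X)))
      = join X X (join X X (Id C X) (Comp C X X X x f)) x"
    using X f x by (simp add: Comp_join_right join_assoc)
  then show "hom_le join X X (join X X (Id C X) (Comp C X X X x f)) x
      \<longleftrightarrow> hom_le join X X (join X X (Id C X) (Comp C X X X x (join X X f (Id C X)))) x"
    using X f x by (simp add: join_le_iff hom_le_refl)
qed (use X f in \<open>auto intro: hom_le_antisym\<close>)

lemma star_simulation:
  assumes X: "X \<in> Obj C" and Y: "Y \<in> Obj C"
    and g: "g \<in> Hom C Y Y" and h: "h \<in> Hom C X X" and k: "k \<in> Hom C Y X"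
    and square: "Comp C Y X X h k = Comp C Y Y X k g"
  shows "Comp C Y X X (star X h) k = Comp C Y Y X k (star Y g)"
proof (rule hom_le_antisym)
  have "Comp C Y X X h (Comp C Y Y X k (star Y g)) = Comp C Y Y X (Comp C Y X X h k) (star Y g)"
    using X Y g h k by (simp add: Comp_assoc)
  also have "\<dots> = Comp C Y Y X k (Comp C Y Y Y g (star Y g))"
    using X Y g k square by (simp add: Comp_assoc)
  finally have "join Y X k (Comp C Y X X h (Comp C Y Y X k (star Y g)))
      = Comp C Y Y X k (join Y Y (Id C Y) (Comp C Y Y Y g (star Y g)))"
    using X Y g k by (simp add: Comp_join_right)
  then have "join Y X k (Comp C Y X X h (Comp C Y Y X k (star Y g))) = Comp C Y Y X k (star Y g)"
    using star_unfold_left[OF Y g] by simp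
  then show "hom_le join Y X (Comp C Y X X (star X h) k) (Comp C Y Y X k (star Y g))"
    using star_Comp_least_prefixpoint[OF Y X h k] X Y g k hom_le_refl
    unfolding least_prefixpoint_def by auto
next
  have "Comp C Y Y X (Comp C Y X X (star X h) k) g = Comp C Y X X (star X h) (Comp C Y Y X k g)"
    using X Y g h k Comp_assoc[of Y Y X X g k "star X h"] by simp
  also have "\<dots> = Comp C Y X X (Comp C X X X (star X h) h) k"
    using X Y h k square Comp_assoc[of Y X X X k h "star X h"] by simp
  finally have "join Y X k (Comp C Y Y X (Comp C Y X X (star X h) k) g)
      = Comp C Y X X (join X X (Id C X) (Comp C X X X (star X h) h)) k"
    using X Y h k by (simp add: Comp_join_left)
  then have "join Y X k (Comp C Y Y X (Comp C Y X X (star X h) k) g) = Comp C Y X X (star X h) k"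
    using star_unfold_right[OF X h] by simp
  then show "hom_le join Y X (Comp C Y Y X k (star Y g)) (Comp C Y X X (star X h) k)"
    using Comp_star_least_prefixpoint[OF Y X g k] X Y h k hom_le_refl
    unfolding least_prefixpoint_def by auto
qed (use X Y g h k in auto)

lemma star_axioms: "star_axioms C join star"
  unfolding star_axioms_def
  by (blast intro: star_in_Hom star_unfold_right star_Id star_join_Id star_simulation)

end

locale star_axioms_category = join_enriched_category +
  fixes star :: "'o \<Rightarrow> 'm \<Rightarrow> 'm"
  assumes star_axioms: "star_axioms C join star"
begin

lemma star_in_Hom [simp]: "\<lbrakk>X \<in> Obj C; f \<in> Hom C X X\<rbrakk> \<Longrightarrow> star X f \<in> Hom C X X"
  using star_axioms unfolding star_axioms_def by blast

lemma star_unfold_right: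
  "\<lbrakk>X \<in> Obj C; f \<in> Hom C X X\<rbrakk> \<Longrightarrow> star X f = join X X (Id C X) (Comp C X X X (star X f) f)"
  using star_axioms unfolding star_axioms_def by blast

lemma star_Id: "X \<in> Obj C \<Longrightarrow> star X (Id C X) = Id C X"
  using star_axioms Id_in_Hom unfolding star_axioms_def by blast

lemma star_join_Id:
  "\<lbrakk>X \<in> Obj C; f \<in> Hom C X X\<rbrakk> \<Longrightarrow> star X f = star X (join X X f (Id C X))"
  using star_axioms unfolding star_axioms_def by blast

lemma star_simulation:
  "\<lbrakk>X \<in> Obj C; Y \<in> Obj C; g \<in> Hom C Y Y; h \<in> Hom C X X; k \<in> Hom C Y X;
    Comp C Y X X h k = Comp C Y Y X k g\<rbrakk>
    \<Longrightarrow> Comp C Y X X (star X h) k = Comp C Y Y X k (star Y g)"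
  using star_axioms unfolding star_axioms_def by blast

lemma star_Comp_commute:
  "\<lbrakk>X \<in> Obj C; f \<in> Hom C X X\<rbrakk> \<Longrightarrow> Comp C X X X (star X f) f = Comp C X X X f (star X f)"
  using star_simulation[of X X f f f] by simp

lemma Comp_star_absorb:
  assumes Y: "Y \<in> Obj C" and Z: "Z \<in> Obj C" and f: "f \<in> Hom C Y Y" and x: "x \<in> Hom C Y Z"
    and le: "hom_le join Y Z (Comp C Y Y Z x f) x"
  shows "Comp C Y Y Z x (star Y f) = x"
proof -
  have "Comp C Y Y Z x (join Y Y f (Id C Y)) = Comp C Y Z Z (Id C Z) x"
    using Y Z f x le unfolding hom_le_def by (simp add: Comp_join_right)
  then have "Comp C Y Z Z (star Z (Id C Z)) x = Comp C Y Y Z x (star Y (join Y Y f (Id C Y)))"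
    using Y Z f x by (intro star_simulation) simp_all
  then show ?thesis
    using Y Z f x by (simp add: star_Id star_join_Id[symmetric])
qed

lemma star_Comp_absorb:
  assumes X: "X \<in> Obj C" and Y: "Y \<in> Obj C" and f: "f \<in> Hom C Y Y" and x: "x \<in> Hom C X Y"
    and le: "hom_le join X Y (Comp C X Y Y f x) x"
  shows "Comp C X Y Y (star Y f) x = x"
proof -
  have "Comp C X Y Y (join Y Y f (Id C Y)) x = Comp C X X Y x (Id C X)"
    using X Y f x le unfolding hom_le_def by (simp add: Comp_join_left)
  then have "Comp C X Y Y (star Y (join Y Y f (Id C Y))) x = Comp C X X Y x (star X (Id C X))"
    using X Y f x by (intro star_simulation) simp_all
  then show ?thesis
    using X Y f x by (simp add: star_Id star_join_Id[symmetric])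
qed

lemma Comp_star_least_prefixpoint:
  assumes Y: "Y \<in> Obj C" and Z: "Z \<in> Obj C" and f: "f \<in> Hom C Y Y" and g: "g \<in> Hom C Y Z"
  shows "least_prefixpoint (Hom C Y Z) (hom_le join Y Z)
           (\<lambda>x. join Y Z g (Comp C Y Y Z x f)) (Comp C Y Y Z g (star Y f))"
  unfolding least_prefixpoint_def
proof (intro conjI ballI impI)
  have "join Y Z g (Comp C Y Y Z (Comp C Y Y Z g (star Y f)) f)
      = Comp C Y Y Z g (join Y Y (Id C Y) (Comp C Y Y Y (star Y f) f))"
    using Y Z f g by (simp add: Comp_assoc Comp_join_right)
  then show "hom_le join Y Z (join Y Z g (Comp C Y Y Z (Comp C Y Y Z g (star Y f)) f))
      (Comp C Y Y Z g (star Y f))"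
    using Y Z f g by (simp add: star_unfold_right[symmetric] hom_le_refl)
next
  fix x assume x: "x \<in> Hom C Y Z" and pre: "hom_le join Y Z (join Y Z g (Comp C Y Y Z x f)) x"
  then have gx: "hom_le join Y Z g x" and xf: "hom_le join Y Z (Comp C Y Y Z x f) x"
    using Y Z f g by (simp_all add: join_le_iff)
  have "hom_le join Y Z (Comp C Y Y Z g (star Y f)) (Comp C Y Y Z x (star Y f))"
    using Y Z f g x gx by (simp add: Comp_mono_left)
  also have "Comp C Y Y Z x (star Y f) = x"
    using Y Z f x xf by (rule Comp_star_absorb)
  finally show "hom_le join Y Z (Comp C Y Y Z g (star Y f)) x" .
qed (use Y Z f g in simp)

lemma star_Comp_least_prefixpoint:
  assumes X: "X \<in> Obj C" and Y: "Y \<in> Obj C" and f: "f \<in> Hom C Y Y" and h: "h \<in> Hom C X Y"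
  shows "least_prefixpoint (Hom C X Y) (hom_le join X Y)
           (\<lambda>x. join X Y h (Comp C X Y Y f x)) (Comp C X Y Y (star Y f) h)"
  unfolding least_prefixpoint_def
proof (intro conjI ballI impI)
  have "join X Y h (Comp C X Y Y f (Comp C X Y Y (star Y f) h))
      = Comp C X Y Y (join Y Y (Id C Y) (Comp C Y Y Y (star Y f) f)) h"
    using X Y f h by (simp add: Comp_assoc Comp_join_left star_Comp_commute)
  then show "hom_le join X Y (join X Y h (Comp C X Y Y f (Comp C X Y Y (star Y f) h)))
      (Comp C X Y Y (star Y f) h)"
    using X Y f h by (simp add: star_unfold_right[symmetric] hom_le_refl)
next
  fix x assume x: "x \<in> Hom C X Y" and pre: "hom_le join X Y (join X Y h (Comp C X Y Y f x)) x"
  then have hx: "hom_le join X Y h x" and fx: "hom_le join X Y (Comp C X Y Y f x) x"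
    using X Y f h by (simp_all add: join_le_iff)
  have "hom_le join X Y (Comp C X Y Y (star Y f) h) (Comp C X Y Y (star Y f) x)"
    using X Y f h x hx by (simp add: Comp_mono_right)
  also have "Comp C X Y Y (star Y f) x = x"
    using X Y f x fx by (rule star_Comp_absorb)
  finally show "hom_le join X Y (Comp C X Y Y (star Y f) h) x" .
qed (use X Y f h in simp)

lemma kk_star: "kk_star C join star"
  unfolding kk_star_def
  by (blast intro: star_in_Hom Comp_star_least_prefixpoint star_Comp_least_prefixpoint)

end

theorem proposition2:
  fixes C :: "('o, 'm) category"
  assumes "category C"
  shows "kleene_kozen_category C \<longleftrightarrow>
           (\<exists>join bt. enriched C join bt \<and> (\<exists>star. star_axioms C join star))"
proof
  assume "kleene_kozen_category C"
  then obtain join bt star where "enriched C join bt" "kk_star C join star"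
    unfolding kleene_kozen_category_def by blast
  then interpret kleene_kozen C join bt star
    using assms by unfold_locales
  show "\<exists>join bt. enriched C join bt \<and> (\<exists>star. star_axioms C join star)"
    using enriched star_axioms by blast
next
  assume "\<exists>join bt. enriched C join bt \<and> (\<exists>star. star_axioms C join star)"
  then obtain join bt star where "enriched C join bt" "star_axioms C join star"
    by blast
  then interpret star_axioms_category C join bt star
    using assms by unfold_locales
  show "kleene_kozen_category C"
    unfolding kleene_kozen_category_def using assms enriched kk_star by blast
qed

end
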